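(* Let $k$ be a field and $\mathcal{B}=\bigoplus_{p\in\mathbb{Z}}\mathcal{B}_p$ a connected graded associative unital $k$-algebra ($\mathcal{B}_{-n}=0$ for $n>0$, $\mathcal{B}_0=k$), with $V:=\mathcal{B}_1$ finite dimensional, and assume $\mathcal{B}$ is generated by $V$, i.e. $\mathcal{B}=TV/(R)$ with $R$ a homogeneous subspace. Let $A_{gr}(\mathcal{B}):=A_{gr}(u,m)$ where $u:k\to\mathcal{B}$ is the unit and $m:\mathcal{B}\otimes\mathcal{B}\to\mathcal{B}$ the multiplication. Then $A_{gr}(\mathcal{B})$ is generated as an algebra by $C_1=\mathrm{End}(V)^*$; that is, the map $T(C_1)\hookrightarrow T(C_{gr})\to A_{gr}(\mathcal{B})$ is surjective.
   Context: For a graded vector space $W=\bigoplus_{p\in\mathbb{Z}}W_p$ with every $W_p$ finite dimensional, set $C_p=\mathrm{End}(W_p)^*$ and $C_{gr}=\bigoplus_p C_p$; with a basis $\{x^{(p)}_i\}$ of $W_p$, $C_p$ has the dual (comatrix) basis $\{t^{(p)}{}_i^j\}$ with $\Delta(t^{(p)}{}_i^j)=\sum_k t^{(p)}{}_i^k\otimes t^{(p)}{}_k^j$, $\epsilon(t^{(p)}{}_i^j)=\delta_i^j$, and $W$ is a graded $C_{gr}$-comodule via $\rho(x^{(p)}_i)=\sum_j t^{(p)}{}_i^j\otimes x^{(p)}_j$. $T(C_{gr})$ is the tensor algebra with the bialgebra structure extending that of $C_{gr}$, so all $W^{\otimes n}$ are $T(C_{gr})$-comodules (with $W^{\otimes0}=k$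 trivial). For a family $F$ of linear maps $f:W^{\otimes n}\to W^{\otimes m}$, $\mathcal{I}_F$ is the ideal of $T(C_{gr})$ generated by the coefficients (in a basis of $W^{\otimes m}$) of $(\mathrm{id}\otimes f)\rho(z)-\rho(f(z))$ for $z$ running over basis tensors of $W^{\otimes n}$, $f\in F$; $A_{gr}(F)=T(C_{gr})/\mathcal{I}_F$ is a bialgebra and $W$ is a graded $A_{gr}(F)$-comodule with all $f\in F$ colinear. Here $W=\mathcal{B}$ and $C_1=\mathrm{End}(\mathcal{B}_1)^*$. *)

theory Defs
  imports Main "HOL.Vector_Spaces" "HOL-Library.Poly_Mapping"
begin

text \<open>Elements of the tensor algebra T(C) on a vector space C with basis indexed by a set G
  of generators are finitely supported k-valued functions on words over G.
  A word [g1,...,gn] stands for the tensor g1 (x) ... (x) gn; the empty word is the unit.\<close>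

definition fa_mult :: "('g list \<Rightarrow>\<^sub>0 'k::comm_ring_1) \<Rightarrow> ('g list \<Rightarrow>\<^sub>0 'k) \<Rightarrow> ('g list \<Rightarrow>\<^sub>0 'k)" where
  "fa_mult f g = (\<Sum>u\<in>Poly_Mapping.keys f. \<Sum>v\<in>Poly_Mapping.keys g. Poly_Mapping.single (u @ v) (Poly_Mapping.lookup f u * Poly_Mapping.lookup g v))"

definition free_alg :: "'g set \<Rightarrow> ('g list \<Rightarrow>\<^sub>0 'k::zero) set" where
  "free_alg G = {f. \<forall>w\<in>Poly_Mapping.keys f. set w \<subseteq> G}"

inductive_set fa_ideal :: "'g set \<Rightarrow> ('g list \<Rightarrow>\<^sub>0 'k::comm_ring_1) set \<Rightarrow> ('g list \<Rightarrow>\<^sub>0 'k) set"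
  for G S where
  gen: "s \<in> S \<Longrightarrow> s \<in> fa_ideal G S"
| zero: "0 \<in> fa_ideal G S"
| add: "x \<in> fa_ideal G S \<Longrightarrow> y \<in> fa_ideal G S \<Longrightarrow> x + y \<in> fa_ideal G S"
| lmult: "x \<in> fa_ideal G S \<Longrightarrow> a \<in> free_alg G \<Longrightarrow> fa_mult a x \<in> fa_ideal G S"
| rmult: "x \<in> fa_ideal G S \<Longrightarrow> a \<in> free_alg G \<Longrightarrow> fa_mult x a \<in> fa_ideal G S"

text \<open>The generator (p,i,j) stands for the comatrix element t^(p)_i^j of C_p = End(W_p)^*,
  where d p = dim W_p and the basis of W_p is xb p 0, ..., xb p (d p - 1).\<close>
definition gens :: "(int \<Rightarrow> nat) \<Rightarrow> (int \<times> nat \<times> nat) set" where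
  "gens d = {(p, i, j). i < d p \<and> j < d p}"

text \<open>Generators of C_1 = End(B_1)^* only.\<close>
definition gens1 :: "(int \<Rightarrow> nat) \<Rightarrow> (int \<times> nat \<times> nat) set" where
  "gens1 d = {(p, i, j). p = 1 \<and> i < d 1 \<and> j < d 1}"

definition coord :: "('k::field \<Rightarrow> 'b::ab_group_add \<Rightarrow> 'b) \<Rightarrow> (int \<Rightarrow> nat) \<Rightarrow> (int \<Rightarrow> nat \<Rightarrow> 'b)
    \<Rightarrow> 'b \<Rightarrow> int \<Rightarrow> nat \<Rightarrow> 'k" where
  "coord scale d xb y s r = module.representation scale {xb p i | p i. i < d p} y (xb s r)"

text \<open>Coefficients (at the basis vector xb s r of W) of (id (x) u) rho(1) - rho(u(1)),
  where u : k \<rightarrow> B is the unit and W^{(x)0} = k with basis 1, rho(1) = 1 (x) 1.\<close>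
definition unit_rels :: "('k::field \<Rightarrow> 'b::ring_1 \<Rightarrow> 'b) \<Rightarrow> (int \<Rightarrow> nat) \<Rightarrow> (int \<Rightarrow> nat \<Rightarrow> 'b)
    \<Rightarrow> ((int \<times> nat \<times> nat) list \<Rightarrow>\<^sub>0 'k) set" where
  "unit_rels scale d xb =
    {Poly_Mapping.single [] (coord scale d xb 1 s r)
      - (\<Sum>l<d s. Poly_Mapping.single [(s, l, r)] (coord scale d xb 1 s l)) | s r. r < d s}"

text \<open>Coefficients (at xb s r) of (id (x) m) rho(z) - rho(m(z)) for the basis tensors
  z = xb p i (x) xb q j of W (x) W, where m is the multiplication and
  rho(xb p i (x) xb q j) = sum_{a,b} t^(p)_i^a t^(q)_j^b (x) xb p a (x) xb q b.\<close>
definition mult_rels :: "('k::field \<Rightarrow> 'b::ring_1 \<Rightarrow> 'b) \<Rightarrow> (int \<Rightarrow> nat) \<Rightarrow> (int \<Rightarrow> nat \<Rightarrow> 'b)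
    \<Rightarrow> ((int \<times> nat \<times> nat) list \<Rightarrow>\<^sub>0 'k) set" where
  "mult_rels scale d xb =
    {(\<Sum>a<d p. \<Sum>b<d q. Poly_Mapping.single [(p, i, a), (q, j, b)]
                              (coord scale d xb (xb p a * xb q b) s r))
      - (\<Sum>l<d s. Poly_Mapping.single [(s, l, r)] (coord scale d xb (xb p i * xb q j) s l))
     | p q i j s r. i < d p \<and> j < d q \<and> r < d s}"

text \<open>The ideal I_F of T(C_gr) for F = {u, m}; A_gr(B) = T(C_gr) / Agr_ideal.\<close>
definition Agr_ideal :: "('k::field \<Rightarrow> 'b::ring_1 \<Rightarrow> 'b) \<Rightarrow> (int \<Rightarrow> nat) \<Rightarrow> (int \<Rightarrow> nat \<Rightarrow> 'b)
    \<Rightarrow> ((int \<times> nat \<times> nat) list \<Rightarrow>\<^sub>0 'k) set" where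
  "Agr_ideal scale d xb = fa_ideal (gens d) (unit_rels scale d xb \<union> mult_rels scale d xb)"

end

theory Submission
  imports Defs
begin

text \<open>Write \<open>t(s,l,r)\<close> for the comatrix generators of \<open>C\<^sub>s\<close> and \<open>x(s,l)\<close> for the basis of
  \<open>\<B>\<^sub>s\<close>. Call an element of \<open>T(C\<^sub>g\<^sub>r)\<close> reducible if it is congruent modulo \<open>\<I>\<^sub>F\<close> to an
  element of \<open>T(C\<^sub>1)\<close>. Reducible elements form a subalgebra, so it suffices to show that every
  generator \<open>t(s,l,r)\<close> is reducible. For fixed \<open>s, r\<close> the map
  \<open>y \<mapsto> \<Sum>\<^sub>l coord\<^sub>s\<^sub>,\<^sub>l(y) t(s,l,r)\<close> is linear, so the \<open>y \<in> \<B>\<close> it sends to reducible elements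
  form a subspace; it sends \<open>x(s,l)\<close> to \<open>t(s,l,r)\<close>. The relation for the unit puts \<open>1\<close> into
  this subspace, which settles degree 0 since \<open>\<B>\<^sub>0 = k\<close>. The relation for the multiplication
  says that the image of \<open>x(1,i) x(m,j)\<close> is congruent to a combination of the products
  \<open>t(1,i,a) t(m,j,b)\<close>, which are reducible by induction on the degree. Since \<open>\<B>\<close> is generated
  in degree 1, these products \<open>x(1,i) x(m,j)\<close> span \<open>\<B>\<^sub>m\<^sub>+\<^sub>1\<close>.\<close>

lemma fa_mult_superset:
  assumes "finite A" "finite B" "Poly_Mapping.keys f \<subseteq> A" "Poly_Mapping.keys g \<subseteq> B"
  shows "fa_mult f g = (\<Sum>u\<in>A. \<Sum>v\<in>B.
           Poly_Mapping.single (u @ v) (Poly_Mapping.lookup f u * Poly_Mapping.lookup g v))"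
proof -
  have "fa_mult f g = (\<Sum>u\<in>Poly_Mapping.keys f. \<Sum>v\<in>B.
           Poly_Mapping.single (u @ v) (Poly_Mapping.lookup f u * Poly_Mapping.lookup g v))"
    unfolding fa_mult_def
    by (intro sum.cong refl sum.mono_neutral_left assms) (auto simp: in_keys_iff)
  also have "\<dots> = (\<Sum>u\<in>A. \<Sum>v\<in>B.
           Poly_Mapping.single (u @ v) (Poly_Mapping.lookup f u * Poly_Mapping.lookup g v))"
    by (intro sum.mono_neutral_left assms) (auto simp: in_keys_iff)
  finally show ?thesis .
qed

lemma fa_mult_add_left: "fa_mult (x + y) z = fa_mult x z + fa_mult y z"
  using keys_add[of x y]
  by (subst (1 2 3) fa_mult_superset[where A = "Poly_Mapping.keys x \<union> Poly_Mapping.keys y"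
        and B = "Poly_Mapping.keys z"])
     (auto simp: lookup_add distrib_right single_add sum.distrib)

lemma fa_mult_add_right: "fa_mult z (x + y) = fa_mult z x + fa_mult z y"
  using keys_add[of x y]
  by (subst (1 2 3) fa_mult_superset[where A = "Poly_Mapping.keys z"
        and B = "Poly_Mapping.keys x \<union> Poly_Mapping.keys y"])
     (auto simp: lookup_add distrib_left single_add sum.distrib)

lemma fa_mult_diff_left: "fa_mult (x - y) z = fa_mult x z - fa_mult y z"
  by (metis add_diff_cancel eq_diff_eq fa_mult_add_left)

lemma fa_mult_diff_right: "fa_mult z (x - y) = fa_mult z x - fa_mult z y"
  by (metis add_diff_cancel eq_diff_eq fa_mult_add_right)

lemma fa_mult_zero_right [simp]: "fa_mult z 0 = 0"
  by (simp add: fa_mult_def)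

lemma fa_mult_sum_right: "fa_mult z (sum F A) = (\<Sum>a\<in>A. fa_mult z (F a))"
  by (induction A rule: infinite_finite_induct) (auto simp: fa_mult_add_right)

lemma fa_mult_single:
  "fa_mult (Poly_Mapping.single u a) (Poly_Mapping.single v b) = Poly_Mapping.single (u @ v) (a * b)"
  by (subst fa_mult_superset[where A = "{u}" and B = "{v}"]) auto

lemma sum_single_lookup:
  "(\<Sum>v\<in>Poly_Mapping.keys x. Poly_Mapping.single v (Poly_Mapping.lookup x v)) = x"
  by (rule poly_mapping_eqI) (auto simp: lookup_sum lookup_single when_def in_keys_iff sum.delta')

lemma fa_mult_single_Nil_left:
  "fa_mult (Poly_Mapping.single [] c) x = (\<Sum>v\<in>Poly_Mapping.keys x.
     Poly_Mapping.single v (c * Poly_Mapping.lookup x v))"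
  by (subst fa_mult_superset[where A = "{[]}" and B = "Poly_Mapping.keys x"]) auto

lemma fa_mult_minus_one: "fa_mult (Poly_Mapping.single [] (-1)) x = - x"
  by (subst fa_mult_single_Nil_left) (simp add: single_uminus sum_negf sum_single_lookup)

lemma free_alg_add: "x \<in> free_alg G \<Longrightarrow> y \<in> free_alg G \<Longrightarrow> x + y \<in> free_alg G"
  unfolding free_alg_def using keys_add[of x y] by blast

lemma free_alg_zero [simp]: "0 \<in> free_alg G"
  unfolding free_alg_def by simp

lemma free_alg_single: "set w \<subseteq> G \<Longrightarrow> Poly_Mapping.single w c \<in> free_alg G"
  unfolding free_alg_def by auto

lemma free_alg_sum: "(\<And>a. a \<in> A \<Longrightarrow> F a \<in> free_alg G) \<Longrightarrow> sum F A \<in> free_alg G"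
  by (induction A rule: infinite_finite_induct) (auto intro: free_alg_add)

lemma free_alg_mult: "x \<in> free_alg G \<Longrightarrow> y \<in> free_alg G \<Longrightarrow> fa_mult x y \<in> free_alg G"
  unfolding fa_mult_def by (intro free_alg_sum free_alg_single) (auto simp: free_alg_def)

lemma free_alg_mono: "G \<subseteq> H \<Longrightarrow> free_alg G \<subseteq> free_alg H"
  unfolding free_alg_def by auto

lemma fa_ideal_diff:
  assumes "x \<in> fa_ideal G S" "y \<in> fa_ideal G S"
  shows "x - y \<in> fa_ideal G S"
proof -
  have "fa_mult (Poly_Mapping.single [] (-1)) y \<in> fa_ideal G S"
    using assms(2) by (rule fa_ideal.lmult) (simp add: free_alg_single)
  then have "x + - y \<in> fa_ideal G S"
    unfolding fa_mult_minus_one using assms(1) by (intro fa_ideal.add)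
  then show ?thesis by simp
qed

section \<open>Elements reducible to a subalgebra\<close>

definition fa_reducible ::
    "'g set \<Rightarrow> 'g set \<Rightarrow> ('g list \<Rightarrow>\<^sub>0 'k::comm_ring_1) set \<Rightarrow> ('g list \<Rightarrow>\<^sub>0 'k) set" where
  "fa_reducible G G1 S = {f \<in> free_alg G. \<exists>g\<in>free_alg G1. f - g \<in> fa_ideal G S}"

context
  fixes G G1 :: "'g set" and S :: "('g list \<Rightarrow>\<^sub>0 'k::comm_ring_1) set"
  assumes G1_subset: "G1 \<subseteq> G"
begin

lemma fa_reducible_if_free_alg: "g \<in> free_alg G1 \<Longrightarrow> g \<in> fa_reducible G G1 S"
  unfolding fa_reducible_def using free_alg_mono[OF G1_subset] by (auto intro!: bexI[of _ g] fa_ideal.zero)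

lemma fa_reducible_add:
  "x \<in> fa_reducible G G1 S \<Longrightarrow> y \<in> fa_reducible G G1 S \<Longrightarrow> x + y \<in> fa_reducible G G1 S"
  unfolding fa_reducible_def
proof (clarify, intro conjI)
  fix g h assume "x \<in> free_alg G" "y \<in> free_alg G" "g \<in> free_alg G1" "h \<in> free_alg G1"
    "x - g \<in> fa_ideal G S" "y - h \<in> fa_ideal G S"
  then show "x + y \<in> free_alg G" "\<exists>g\<in>free_alg G1. x + y - g \<in> fa_ideal G S"
    using fa_ideal.add[of "x - g" G S "y - h"]
    by (auto intro!: free_alg_add bexI[of _ "g + h"] simp: algebra_simps)
qed

lemma fa_reducible_mult:
  "x \<in> fa_reducible G G1 S \<Longrightarrow> y \<in> fa_reducible G G1 S \<Longrightarrow> fa_mult x y \<in> fa_reducible G G1 S"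
  unfolding fa_reducible_def
proof (clarify, intro conjI)
  fix g h assume x: "x \<in> free_alg G" and y: "y \<in> free_alg G"
    and g: "g \<in> free_alg G1" and h: "h \<in> free_alg G1"
    and xg: "x - g \<in> fa_ideal G S" and yh: "y - h \<in> fa_ideal G S"
  have "fa_mult x y - fa_mult g h = fa_mult (x - g) y + fa_mult g (y - h)"
    by (simp add: fa_mult_diff_left fa_mult_diff_right)
  also have "\<dots> \<in> fa_ideal G S"
    using g free_alg_mono[OF G1_subset] by (blast intro: fa_ideal.add fa_ideal.rmult fa_ideal.lmult xg yh y)
  finally show "\<exists>g\<in>free_alg G1. fa_mult x y - g \<in> fa_ideal G S"
    using free_alg_mult[OF g h] by blast
  show "fa_mult x y \<in> free_alg G" using x y by (rule free_alg_mult)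
qed

lemma fa_reducible_sum:
  "(\<And>a. a \<in> A \<Longrightarrow> F a \<in> fa_reducible G G1 S) \<Longrightarrow> sum F A \<in> fa_reducible G G1 S"
  by (induction A rule: infinite_finite_induct)
     (auto intro: fa_reducible_add fa_reducible_if_free_alg)

lemma fa_reducible_smult:
  "x \<in> fa_reducible G G1 S \<Longrightarrow> fa_mult (Poly_Mapping.single [] c) x \<in> fa_reducible G G1 S"
  by (rule fa_reducible_mult[OF fa_reducible_if_free_alg[OF free_alg_single]]) auto

lemma fa_reducible_congruent:
  assumes "x \<in> fa_reducible G G1 S" "x - y \<in> fa_ideal G S" "y \<in> free_alg G"
  shows "y \<in> fa_reducible G G1 S"
proof -
  from assms(1) obtain g where g: "g \<in> free_alg G1" "x - g \<in> fa_ideal G S"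
    unfolding fa_reducible_def by blast
  have "(x - g) - (x - y) \<in> fa_ideal G S" using g(2) assms(2) by (rule fa_ideal_diff)
  with g(1) assms(3) show ?thesis unfolding fa_reducible_def by auto
qed

lemma free_alg_subset_fa_reducible:
  assumes generators: "\<And>g. g \<in> G \<Longrightarrow> Poly_Mapping.single [g] 1 \<in> fa_reducible G G1 S"
  shows "free_alg G \<subseteq> fa_reducible G G1 S"
proof
  have word: "Poly_Mapping.single w 1 \<in> fa_reducible G G1 S" if "set w \<subseteq> G" for w
    using that
  proof (induction w)
    case Nil
    then show ?case by (intro fa_reducible_if_free_alg free_alg_single) auto
  next
    case (Cons g w)
    then have "fa_mult (Poly_Mapping.single [g] 1) (Poly_Mapping.single w 1) \<in> fa_reducible G G1 S"
      by (intro fa_reducible_mult generators) auto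
    then show ?case by (simp add: fa_mult_single)
  qed
  fix f :: "'g list \<Rightarrow>\<^sub>0 'k" assume f: "f \<in> free_alg G"
  have "(\<Sum>w\<in>Poly_Mapping.keys f. Poly_Mapping.single w (Poly_Mapping.lookup f w))
          \<in> fa_reducible G G1 S"
  proof (rule fa_reducible_sum)
    fix w assume "w \<in> Poly_Mapping.keys f"
    then have "fa_mult (Poly_Mapping.single [] (Poly_Mapping.lookup f w)) (Poly_Mapping.single w 1)
                 \<in> fa_reducible G G1 S"
      using f unfolding free_alg_def by (blast intro: fa_reducible_smult word)
    then show "Poly_Mapping.single w (Poly_Mapping.lookup f w) \<in> fa_reducible G G1 S"
      by (simp add: fa_mult_single)
  qed
  then show "f \<in> fa_reducible G G1 S" by (simp only: sum_single_lookup)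
qed

end

lemma gens1_subset_gens: "gens1 d \<subseteq> gens d"
  unfolding gens1_def gens_def by auto

section \<open>Connected graded algebras with homogeneous bases\<close>

locale connected_graded_algebra = vector_space scale
  for scale :: "'k::field \<Rightarrow> 'b::ring_1 \<Rightarrow> 'b" +
  fixes Bg :: "int \<Rightarrow> 'b set" and d :: "int \<Rightarrow> nat" and xb :: "int \<Rightarrow> nat \<Rightarrow> 'b"
  assumes scale_mult_left: "\<And>a x y. scale a (x * y) = scale a x * y"
    and scale_mult_right: "\<And>a x y. scale a (x * y) = x * scale a y"
    and subspace_Bg: "\<And>p. subspace (Bg p)"
    and direct_sum: "\<And>S f. finite S \<Longrightarrow> (\<forall>p\<in>S. f p \<in> Bg p) \<Longrightarrow> sum f S = 0 \<Longrightarrow> (\<forall>p\<in>S. f p = 0)"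
    and span_Bg: "span (\<Union>p. Bg p) = UNIV"
    and mult_Bg: "\<And>p q x y. x \<in> Bg p \<Longrightarrow> y \<in> Bg q \<Longrightarrow> x * y \<in> Bg (p + q)"
    and Bg_neg: "\<And>p. p < 0 \<Longrightarrow> Bg p = {0}"
    and Bg_0: "Bg 0 = range (\<lambda>a. scale a 1)"
    and generated: "span {prod_list xs | xs. set xs \<subseteq> Bg 1} = UNIV"
    and basis: "\<And>p. inj_on (xb p) {..<d p} \<and> \<not> dependent (xb p ` {..<d p})
                     \<and> span (xb p ` {..<d p}) = Bg p"
begin

definition XB :: "'b set" where "XB = {xb p i | p i. i < d p}"

lemma xb_in_Bg: "i < d p \<Longrightarrow> xb p i \<in> Bg p"
  using basis[of p] span_base[of "xb p i" "xb p ` {..<d p}"] by auto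

lemma xb_nonzero: "i < d p \<Longrightarrow> xb p i \<noteq> 0"
  using basis[of p] dependent_zero[of "xb p ` {..<d p}"] by force

lemma d_neg: "p < 0 \<Longrightarrow> d p = 0"
  using xb_in_Bg[of 0 p] xb_nonzero[of 0 p] Bg_neg[of p] by (cases "d p") auto

lemma homogeneous_component:
  fixes deg :: "'c \<Rightarrow> int"
  assumes T: "finite T" and w: "\<And>t. t \<in> T \<Longrightarrow> w t \<in> Bg (deg t)"
    and y: "y \<in> Bg s" and y_eq: "y = sum w T"
  shows "y = sum w {t\<in>T. deg t = s}"
proof -
  define F where "F p = sum w {t\<in>T. deg t = p}" for p
  define D where "D = insert s (deg ` T)"
  define f where "f p = F p - (if p = s then y else 0)" for p
  have "F p \<in> Bg p" for p
    unfolding F_def by (rule subspace_sum[OF subspace_Bg]) (auto intro: w)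
  then have "\<forall>p\<in>D. f p \<in> Bg p"
    using y by (auto simp: f_def intro!: subspace_diff[OF subspace_Bg] subspace_0[OF subspace_Bg])
  moreover have "sum F D = y"
  proof -
    have "sum F D = sum F (deg ` T)"
      unfolding D_def by (cases "s \<in> deg ` T") (auto simp: F_def T intro!: sum.neutral)
    also have "\<dots> = y" unfolding y_eq F_def by (rule sum.image_gen[OF T, symmetric])
    finally show ?thesis .
  qed
  then have "sum f D = 0"
    unfolding f_def sum_subtractf using T by (simp add: D_def sum.delta)
  ultimately have "\<forall>p\<in>D. f p = 0" by (intro direct_sum) (simp_all add: D_def T)
  then show ?thesis by (simp add: D_def f_def F_def)
qed

lemma xb_degree_unique:
  assumes "i < d p" "j < d q" "xb p i = xb q j"
  shows "p = q"
proof (rule ccontr)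
  assume pq: "p \<noteq> q"
  define f where "f t = (if t = p then xb p i else - xb q j)" for t
  have "\<forall>t\<in>{p, q}. f t \<in> Bg t"
    using pq xb_in_Bg[OF assms(1)] subspace_neg[OF subspace_Bg xb_in_Bg[OF assms(2)]]
    by (simp add: f_def)
  moreover have "sum f {p, q} = 0" using pq assms(3) by (simp add: f_def)
  ultimately have "\<forall>t\<in>{p, q}. f t = 0" by (intro direct_sum) simp_all
  then show False using xb_nonzero[OF assms(1)] by (simp add: f_def)
qed

lemma xb_eq_iff: "i < d p \<Longrightarrow> j < d q \<Longrightarrow> xb p i = xb q j \<longleftrightarrow> p = q \<and> i = j"
  using xb_degree_unique[of i p j q] basis[of p] by (auto simp: inj_on_def)

lemma XB_independent: "\<not> dependent XB"
  unfolding independent_explicit_module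
proof (intro allI impI)
  fix T u v assume T: "finite T" "T \<subseteq> XB" and sum_0: "(\<Sum>v\<in>T. scale (u v) v) = 0" and v: "v \<in> T"
  define deg where "deg w = (SOME p. \<exists>i<d p. w = xb p i)" for w
  have deg: "\<exists>i<d (deg w). w = xb (deg w) i" if "w \<in> XB" for w
  proof -
    have "\<exists>p. \<exists>i<d p. w = xb p i" using that unfolding XB_def by blast
    then show ?thesis unfolding deg_def by (rule someI_ex)
  qed
  have "0 = (\<Sum>w\<in>{t\<in>T. deg t = deg v}. scale (u w) w)"
  proof (rule homogeneous_component[OF T(1)])
    show "scale (u t) t \<in> Bg (deg t)" if t: "t \<in> T" for t
    proof -
      obtain i where "i < d (deg t)" "t = xb (deg t) i" using deg[of t] t T(2) by blast
      then have "t \<in> Bg (deg t)" by (metis xb_in_Bg)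
      then show ?thesis by (rule subspace_scale[OF subspace_Bg])
    qed
  qed (use sum_0 subspace_0[OF subspace_Bg] in simp_all)
  moreover have "{t\<in>T. deg t = deg v} \<subseteq> xb (deg v) ` {..<d (deg v)}"
    using deg T(2) by fastforce
  ultimately show "u v = 0"
    using basis[of "deg v"] v T(1)
    by (intro independentD[where s = "xb (deg v) ` {..<d (deg v)}" and t = "{t\<in>T. deg t = deg v}"])
       auto
qed

lemma span_XB: "span XB = UNIV"
proof -
  have "Bg p \<subseteq> span XB" for p
    using basis[of p] span_mono[of "xb p ` {..<d p}" XB] unfolding XB_def by auto
  then have "span (\<Union>p. Bg p) \<subseteq> span XB" by (intro span_minimal) auto
  then show ?thesis using span_Bg by auto
qed

lemma coord_xb:
  assumes "i < d p" "r < d s"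
  shows "coord scale d xb (xb p i) s r = (if p = s \<and> i = r then 1 else 0)"
proof -
  have "xb p i \<in> XB" using assms unfolding XB_def by auto
  then show ?thesis unfolding coord_def XB_def[symmetric]
    using representation_basis[OF XB_independent] xb_eq_iff[OF assms(2) assms(1)] by auto
qed

lemma coord_add: "coord scale d xb (x + y) s r = coord scale d xb x s r + coord scale d xb y s r"
  unfolding coord_def XB_def[symmetric] by (simp add: representation_add[OF XB_independent] span_XB)

lemma coord_scale: "coord scale d xb (scale a y) s r = a * coord scale d xb y s r"
  unfolding coord_def XB_def[symmetric] by (simp add: representation_scale[OF XB_independent] span_XB)

lemma subspace_mult_left_preimage: "subspace A \<Longrightarrow> subspace {x. x * b \<in> A}"
  unfolding subspace_def by (auto simp: distrib_right scale_mult_left[symmetric])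

lemma subspace_mult_right_preimage: "subspace A \<Longrightarrow> subspace {y. a * y \<in> A}"
  unfolding subspace_def by (auto simp: distrib_left scale_mult_right[symmetric])

lemma mult_in_span_products:
  assumes "x \<in> span A" "y \<in> span B"
  shows "x * y \<in> span {a * b | a b. a \<in> A \<and> b \<in> B}"
proof -
  let ?P = "span {a * b | a b. a \<in> A \<and> b \<in> B}"
  have "a * y \<in> ?P" if "a \<in> A" for a
    using span_subspace_induct[OF assms(2) subspace_mult_right_preimage[of ?P a]] that
    by (auto intro: span_base)
  then show ?thesis
    using span_subspace_induct[OF assms(1) subspace_mult_left_preimage[of ?P y]] by auto
qed

lemma one_in_Bg_0: "1 \<in> Bg 0"
  unfolding Bg_0 by (metis rangeI scale_one)

lemma prod_list_in_Bg: "set xs \<subseteq> Bg 1 \<Longrightarrow> prod_list xs \<in> Bg (int (length xs))"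
proof (induction xs)
  case Nil
  then show ?case using one_in_Bg_0 by simp
next
  case (Cons x xs)
  then have "x * prod_list xs \<in> Bg (1 + int (length xs))" by (intro mult_Bg) auto
  then show ?case by simp
qed

lemma Bg_subset_span_words: "Bg (int n) \<subseteq> span {prod_list xs | xs. set xs \<subseteq> Bg 1 \<and> length xs = n}"
proof
  fix y assume y: "y \<in> Bg (int n)"
  have "y \<in> span {prod_list xs | xs. set xs \<subseteq> Bg 1}" using generated by simp
  then obtain T r where T: "finite T" "T \<subseteq> {prod_list xs | xs. set xs \<subseteq> Bg 1}"
    and y_eq: "y = (\<Sum>a\<in>T. scale (r a) a)"
    unfolding span_explicit by blast
  define word where "word a = (SOME xs. set xs \<subseteq> Bg 1 \<and> a = prod_list xs)" for a
  have word: "set (word a) \<subseteq> Bg 1 \<and> a = prod_list (word a)" if "a \<in> T" for a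
  proof -
    have "\<exists>xs. set xs \<subseteq> Bg 1 \<and> a = prod_list xs" using that T(2) by blast
    then show ?thesis unfolding word_def by (rule someI_ex)
  qed
  have "y = (\<Sum>a\<in>{t\<in>T. int (length (word t)) = int n}. scale (r a) a)"
  proof (rule homogeneous_component[OF T(1) _ y y_eq])
    show "scale (r t) t \<in> Bg (int (length (word t)))" if "t \<in> T" for t
      using word[OF that] prod_list_in_Bg by (metis subspace_scale[OF subspace_Bg])
  qed
  also have "\<dots> \<in> span {prod_list xs | xs. set xs \<subseteq> Bg 1 \<and> length xs = n}"
  proof (intro span_sum span_scale span_base)
    fix t assume "t \<in> {t\<in>T. int (length (word t)) = int n}"
    then show "t \<in> {prod_list xs | xs. set xs \<subseteq> Bg 1 \<and> length xs = n}"
      using word[of t] by auto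
  qed
  finally show "y \<in> span {prod_list xs | xs. set xs \<subseteq> Bg 1 \<and> length xs = n}" .
qed

lemma Bg_Suc_subset_span_products:
  "Bg (int m + 1) \<subseteq> span {xb 1 i * xb (int m) j | i j. i < d 1 \<and> j < d (int m)}"
proof -
  let ?P = "{xb 1 i * xb (int m) j | i j. i < d 1 \<and> j < d (int m)}"
  have "prod_list xs \<in> span ?P" if "set xs \<subseteq> Bg 1" "length xs = Suc m" for xs
  proof -
    obtain x xs' where xs: "xs = x # xs'" using \<open>length xs = Suc m\<close> by (cases xs) auto
    have "x \<in> span (xb 1 ` {..<d 1})" "prod_list xs' \<in> span (xb (int m) ` {..<d (int m)})"
      using that prod_list_in_Bg[of xs'] basis[of 1] basis[of "int m"] xs by auto
    then have "x * prod_list xs' \<in> span {a * b | a b. a \<in> xb 1 ` {..<d 1} \<and> b \<in> xb (int m) ` {..<d (int m)}}"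
      by (rule mult_in_span_products)
    also have "{a * b | a b. a \<in> xb 1 ` {..<d 1} \<and> b \<in> xb (int m) ` {..<d (int m)}} = ?P"
      by blast
    finally show ?thesis using xs by simp
  qed
  then have "span {prod_list xs | xs. set xs \<subseteq> Bg 1 \<and> length xs = Suc m} \<subseteq> span ?P"
    by (intro span_minimal) auto
  then show ?thesis using Bg_subset_span_words[of "Suc m"] by (simp add: add.commute)
qed

subsection \<open>Reducing the comatrix generators\<close>

abbreviation relations :: "((int \<times> nat \<times> nat) list \<Rightarrow>\<^sub>0 'k) set" where "relations \<equiv> unit_rels scale d xb \<union> mult_rels scale d xb"

abbreviation reducible :: "((int \<times> nat \<times> nat) list \<Rightarrow>\<^sub>0 'k) set" where "reducible \<equiv> fa_reducible (gens d) (gens1 d) relations"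

text \<open>The coefficient of \<open>\<rho>(y) \<in> C\<^sub>g\<^sub>r \<otimes> \<B>\<close> at the basis vector \<open>x(s,r)\<close>.\<close>

definition rho_coeff :: "int \<Rightarrow> nat \<Rightarrow> 'b \<Rightarrow> ((int \<times> nat \<times> nat) list \<Rightarrow>\<^sub>0 'k)" where
  "rho_coeff s r y = (\<Sum>l<d s. Poly_Mapping.single [(s, l, r)] (coord scale d xb y s l))"

lemma rho_coeff_in_free_alg: "r < d s \<Longrightarrow> rho_coeff s r y \<in> free_alg (gens d)"
  unfolding rho_coeff_def by (intro free_alg_sum free_alg_single) (auto simp: gens_def)

lemma rho_coeff_xb:
  assumes "l < d s" "r < d s"
  shows "rho_coeff s r (xb s l) = Poly_Mapping.single [(s, l, r)] 1"
proof -
  have "rho_coeff s r (xb s l) = (\<Sum>l'<d s. if l' = l then Poly_Mapping.single [(s, l, r)] 1 else 0)"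
    unfolding rho_coeff_def by (rule sum.cong) (auto simp: coord_xb assms(1))
  then show ?thesis using assms(1) by simp
qed

lemma subspace_rho_coeff_reducible: "subspace {y. rho_coeff s r y \<in> reducible}"
proof -
  have zero: "rho_coeff s r 0 = 0"
    unfolding rho_coeff_def using coord_scale[of 0 0] by simp
  have add: "rho_coeff s r (x + y) = rho_coeff s r x + rho_coeff s r y" for x y
    unfolding rho_coeff_def by (simp add: coord_add single_add sum.distrib)
  have scale: "rho_coeff s r (scale c y) = fa_mult (Poly_Mapping.single [] c) (rho_coeff s r y)" for c y
    unfolding rho_coeff_def by (simp add: coord_scale fa_mult_sum_right fa_mult_single)
  show ?thesis
    unfolding subspace_def mem_Collect_eq zero add scale
    by (auto intro: fa_reducible_if_free_alg[OF gens1_subset_gens] fa_reducible_add[OF gens1_subset_gens]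
                    fa_reducible_smult[OF gens1_subset_gens])
qed

lemma generator_reducible_if_spanning:
  assumes "Bg s \<subseteq> span Y" and "\<And>y. y \<in> Y \<Longrightarrow> rho_coeff s r y \<in> reducible"
    and "l < d s" "r < d s"
  shows "Poly_Mapping.single [(s, l, r)] 1 \<in> reducible"
proof -
  have "xb s l \<in> span Y" using assms(1) xb_in_Bg[OF assms(3)] by blast
  then have "rho_coeff s r (xb s l) \<in> reducible"
    using span_subspace_induct[OF _ subspace_rho_coeff_reducible] assms(2) by blast
  then show ?thesis by (simp add: rho_coeff_xb assms(3,4))
qed

lemma rho_coeff_one_reducible:
  assumes "r < d s"
  shows "rho_coeff s r 1 \<in> reducible"
proof (rule fa_reducible_congruent[OF gens1_subset_gens])
  show "Poly_Mapping.single [] (coord scale d xb 1 s r) \<in> reducible"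
    by (intro fa_reducible_if_free_alg gens1_subset_gens free_alg_single) simp
  have "Poly_Mapping.single [] (coord scale d xb 1 s r) - rho_coeff s r 1 \<in> unit_rels scale d xb"
    unfolding unit_rels_def rho_coeff_def using assms by blast
  then show "Poly_Mapping.single [] (coord scale d xb 1 s r) - rho_coeff s r 1
               \<in> fa_ideal (gens d) relations"
    by (simp add: fa_ideal.gen)
  show "rho_coeff s r 1 \<in> free_alg (gens d)" using assms by (rule rho_coeff_in_free_alg)
qed

lemma rho_coeff_product_reducible:
  assumes generators_q: "\<And>j b. j < d q \<Longrightarrow> b < d q \<Longrightarrow> Poly_Mapping.single [(q, j, b)] 1 \<in> reducible"
    and "i < d 1" "j < d q" "r < d s"
  shows "rho_coeff s r (xb 1 i * xb q j) \<in> reducible"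
proof (rule fa_reducible_congruent[OF gens1_subset_gens])
  define L where "L = (\<Sum>a<d 1. \<Sum>b<d q. Poly_Mapping.single [(1, i, a), (q, j, b)]
                          (coord scale d xb (xb 1 a * xb q b) s r))"
  have "Poly_Mapping.single [(1, i, a), (q, j, b)] c \<in> reducible" if "a < d 1" "b < d q" for a b c
  proof -
    have "Poly_Mapping.single [(1, i, a)] 1 \<in> reducible"
      using assms(2) that(1) by (intro fa_reducible_if_free_alg gens1_subset_gens free_alg_single)
                                (simp add: gens1_def)
    then have "fa_mult (Poly_Mapping.single [] c)
        (fa_mult (Poly_Mapping.single [(1, i, a)] 1) (Poly_Mapping.single [(q, j, b)] 1)) \<in> reducible"
      using generators_q[OF assms(3) that(2)]
      by (intro fa_reducible_smult fa_reducible_mult gens1_subset_gens)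
    then show ?thesis by (simp add: fa_mult_single)
  qed
  then show "L \<in> reducible"
    unfolding L_def by (intro fa_reducible_sum gens1_subset_gens) auto
  have "L - rho_coeff s r (xb 1 i * xb q j) \<in> mult_rels scale d xb"
    unfolding mult_rels_def L_def rho_coeff_def using assms(2-4) by blast
  then show "L - rho_coeff s r (xb 1 i * xb q j) \<in> fa_ideal (gens d) relations"
    by (simp add: fa_ideal.gen)
  show "rho_coeff s r (xb 1 i * xb q j) \<in> free_alg (gens d)"
    using assms(4) by (rule rho_coeff_in_free_alg)
qed

lemma generator_reducible_nonneg:
  "l < d (int n) \<Longrightarrow> r < d (int n) \<Longrightarrow> Poly_Mapping.single [(int n, l, r)] 1 \<in> reducible"
proof (induction n arbitrary: l r)
  case 0
  have "Bg 0 \<subseteq> span {1}" by (simp add: Bg_0 span_singleton)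
  with 0 show ?case
    using generator_reducible_if_spanning[of 0 "{1}"] rho_coeff_one_reducible by simp
next
  case (Suc m)
  have "Bg (int (Suc m)) \<subseteq> span {xb 1 i * xb (int m) j | i j. i < d 1 \<and> j < d (int m)}"
    using Bg_Suc_subset_span_products[of m] by (simp add: add.commute)
  with Suc show ?case
    by (intro generator_reducible_if_spanning) (auto intro: rho_coeff_product_reducible)
qed

lemma generator_reducible:
  assumes "g \<in> gens d"
  shows "Poly_Mapping.single [g] 1 \<in> reducible"
proof -
  obtain p l r where g: "g = (p, l, r)" "l < d p" "r < d p" using assms unfolding gens_def by auto
  then have "\<not> p < 0" using d_neg by fastforce
  then obtain n where "p = int n" by (metis nonneg_int_cases not_less)
  with g show ?thesis using generator_reducible_nonneg by simp
qed

end

theorem mainTheorem5: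
  fixes scale :: "'k::field \<Rightarrow> 'b::ring_1 \<Rightarrow> 'b"
    and Bg :: "int \<Rightarrow> 'b set"
    and d :: "int \<Rightarrow> nat"
    and xb :: "int \<Rightarrow> nat \<Rightarrow> 'b"
  assumes vs: "vector_space scale"
    and alg_l: "\<And>a x y. scale a (x * y) = scale a x * y"
    and alg_r: "\<And>a x y. scale a (x * y) = x * scale a y"
    and sub: "\<And>p. module.subspace scale (Bg p)"
    and dsum_indep: "\<And>S f. finite S \<Longrightarrow> (\<forall>p\<in>S. f p \<in> Bg p) \<Longrightarrow> sum f S = 0 \<Longrightarrow> (\<forall>p\<in>S. f p = 0)"
    and dsum_span: "module.span scale (\<Union>p. Bg p) = UNIV"
    and graded: "\<And>p q x y. x \<in> Bg p \<Longrightarrow> y \<in> Bg q \<Longrightarrow> x * y \<in> Bg (p + q)"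
    and neg: "\<And>p. p < 0 \<Longrightarrow> Bg p = {0}"
    and connected: "Bg 0 = range (\<lambda>a. scale a 1)"
    and generated: "module.span scale {prod_list xs | xs. set xs \<subseteq> Bg 1} = UNIV"
    and basis: "\<And>p. inj_on (xb p) {..<d p} \<and> \<not> module.dependent scale (xb p ` {..<d p})
                     \<and> module.span scale (xb p ` {..<d p}) = Bg p"
  shows "\<forall>f \<in> free_alg (gens d). \<exists>g \<in> free_alg (gens1 d). f - g \<in> Agr_ideal scale d xb"
proof -
  interpret connected_graded_algebra scale Bg d xb
    by (rule connected_graded_algebra.intro[OF vs], unfold_locales) (use assms in auto)
  have "free_alg (gens d) \<subseteq> reducible"
    by (rule free_alg_subset_fa_reducible[OF gens1_subset_gens generator_reducible])
  then show ?thesis unfolding Agr_ideal_def fa_reducible_def by blast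
qed

end
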